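(* Fix $\gamma>0$ and let $S_\gamma=((\mathbf{x}_i,c_i(\gamma)))_{i\in I_\gamma}$ where $I_\gamma=\{i\in\{1,\dots,k\}:c_i(0)\ne c_i(\gamma)\}$, and assume $I_\gamma\neq\emptyset$. For $\gamma'\in\{0,\gamma\}$ let $\hat\beta(\gamma')\in\Theta$ be a maximizer of $\beta\mapsto L(D_{\gamma'};\beta)$, where $D_{\gamma'}=((\mathbf{x}_i,c_i(\gamma')))_{i=1}^k$. Then $$\mu(S_\gamma;\hat\beta(\gamma))\ge\mu(S_\gamma;\hat\beta(0)).$$
   Context: Let $k\ge1$, $\varepsilon\in(0,1)$, $\delta\ge0$, examples $\mathbf{z}_i=(\mathbf{x}_i,y_i)$, $i=1,\dots,k$, with $\mathbf{x}_i\in\mathbb{R}^m$, base conformity values $A(\mathbf{z}_i)\in\mathbb{R}$, and numbers $p_i\in[0,1]$. The update function is $U^*(\mathbf{z}_i;A,\delta)=+1$ if $p_i<(1-\varepsilon)-\delta$, $-1$ if $p_i>(1-\varepsilon)+\delta$, $0$ otherwise; $A^*_\gamma(\mathbf{z}_i)=A(\mathbf{z}_i)+\gamma U^*(\mathbf{z}_i;A,\delta)$. Define $q(\gamma)$: among indices $i$ with $\sum_{j=1}^k\mathbb{I}[A^*_\gamma(\mathbf{z}_i)\ge A^*_\gamma(\mathbf{z}_j)]+1\ge\varepsilon(k+1)$, take those minimizing $A^*_\gamma(\mathbf{z}_i)$ and let $q(\gamma)$ be the smallest such index; $t(\gamma)=A^*_\gamma(\mathbf{z}_{q(\gamma)})$,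 and $c_i(\gamma)=\mathbb{I}[A^*_\gamma(\mathbf{z}_i)\ge t(\gamma)]$. Fix a parametric family of conditional distributions of a binary outcome $C\in\{0,1\}$ given $\mathbf{x}$, indexed by $\beta\in\Theta$, with $0<\mathbb{P}(C=1\mid\mathbf{x};\beta)<1$ and $\mathbb{P}(C=0\mid\mathbf{x};\beta)=1-\mathbb{P}(C=1\mid\mathbf{x};\beta)$ (e.g. logistic regression). For a finite data set $E$ of pairs $(\mathbf{x},c)$, $L(E;\beta)=\sum_{(\mathbf{x},c)\in E}\log\mathbb{P}(C=c\mid\mathbf{x};\beta)$ is the binomial log-likelihood and, for non-empty $E$, $\mu(E;\beta)=\frac{1}{|E|}\sum_{(\mathbf{x},c)\in E}\log\frac{\mathbb{P}(C=c\mid\mathbf{x};\beta)}{1-\mathbb{P}(C=c\mid\mathbf{x};\beta)}$ is the sample mean of conditional log-odds. *)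

theory Defs
  imports "HOL-Analysis.Analysis"
begin

definition Ustar :: "real \<Rightarrow> real \<Rightarrow> real \<Rightarrow> real" where
  "Ustar eps delta pval =
     (if pval < (1 - eps) - delta then 1 else if pval > (1 - eps) + delta then -1 else 0)"

definition Astar :: "real \<Rightarrow> real \<Rightarrow> (nat \<Rightarrow> real) \<Rightarrow> (nat \<Rightarrow> real) \<Rightarrow> real \<Rightarrow> nat \<Rightarrow> real" where
  "Astar eps delta A p gamma i = A i + gamma * Ustar eps delta (p i)"

definition qcand :: "nat \<Rightarrow> real \<Rightarrow> real \<Rightarrow> (nat \<Rightarrow> real) \<Rightarrow> (nat \<Rightarrow> real) \<Rightarrow> real \<Rightarrow> nat set" where
  "qcand k eps delta A p gamma =
     {i \<in> {1..k}. real (card {j \<in> {1..k}. Astar eps delta A p gamma i \<ge> Astar eps delta A p gamma j}) + 1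
                   \<ge> eps * (real k + 1)}"

definition qidx :: "nat \<Rightarrow> real \<Rightarrow> real \<Rightarrow> (nat \<Rightarrow> real) \<Rightarrow> (nat \<Rightarrow> real) \<Rightarrow> real \<Rightarrow> nat" where
  "qidx k eps delta A p gamma =
     (LEAST i. i \<in> qcand k eps delta A p gamma \<and>
        (\<forall>j \<in> qcand k eps delta A p gamma. Astar eps delta A p gamma i \<le> Astar eps delta A p gamma j))"

definition tval :: "nat \<Rightarrow> real \<Rightarrow> real \<Rightarrow> (nat \<Rightarrow> real) \<Rightarrow> (nat \<Rightarrow> real) \<Rightarrow> real \<Rightarrow> real" where
  "tval k eps delta A p gamma = Astar eps delta A p gamma (qidx k eps delta A p gamma)"

definition cval :: "nat \<Rightarrow> real \<Rightarrow> real \<Rightarrow> (nat \<Rightarrow> real) \<Rightarrow> (nat \<Rightarrow> real) \<Rightarrow> real \<Rightarrow> nat \<Rightarrow> nat" where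
  "cval k eps delta A p gamma i =
     (if Astar eps delta A p gamma i \<ge> tval k eps delta A p gamma then 1 else 0)"

text \<open>P(C = c | x; beta), where Pr beta x = P(C = 1 | x; beta).\<close>
definition condP :: "('b \<Rightarrow> 'x \<Rightarrow> real) \<Rightarrow> 'b \<Rightarrow> 'x \<Rightarrow> nat \<Rightarrow> real" where
  "condP Pr beta xv c = (if c = 1 then Pr beta xv else 1 - Pr beta xv)"

text \<open>Data sets are finite families ((xs i, cs i))_{i in I}.\<close>
definition loglik :: "('b \<Rightarrow> 'x \<Rightarrow> real) \<Rightarrow> nat set \<Rightarrow> (nat \<Rightarrow> 'x) \<Rightarrow> (nat \<Rightarrow> nat) \<Rightarrow> 'b \<Rightarrow> real" where
  "loglik Pr I xs cs beta = (\<Sum>i\<in>I. ln (condP Pr beta (xs i) (cs i)))"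

definition mu_lo :: "('b \<Rightarrow> 'x \<Rightarrow> real) \<Rightarrow> nat set \<Rightarrow> (nat \<Rightarrow> 'x) \<Rightarrow> (nat \<Rightarrow> nat) \<Rightarrow> 'b \<Rightarrow> real" where
  "mu_lo Pr I xs cs beta =
     (1 / real (card I)) * (\<Sum>i\<in>I. ln (condP Pr beta (xs i) (cs i) / (1 - condP Pr beta (xs i) (cs i))))"

end

theory Submission
  imports Defs
begin

text \<open>On the examples whose label changes, the log-likelihood of the new labelling minus that of
  the old one is exactly the sum of the conditional log-odds of the new labels, since for a binary
  outcome the probability of the old label is one minus that of the new one. Hence \<open>\<mu>(S;\<beta>)\<close> is
  \<open>(L(D\<^sub>\<gamma>;\<beta>) - L(D\<^sub>0;\<beta>)) / |S|\<close>, and a maximiser of \<open>L(D\<^sub>\<gamma>;-)\<close> makes the first term at least as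
  large, and the second at most as large, as a maximiser of \<open>L(D\<^sub>0;-)\<close> does.\<close>

lemma cval_binary: "cval k eps delta A p gamma i \<in> {0, 1}"
  by (simp add: cval_def)

lemma condP_other_label:
  assumes "c \<in> {0, 1}" and "c' \<in> {0, 1}" and "c \<noteq> c'"
  shows "1 - condP Pr beta xv c = condP Pr beta xv c'"
  using assms by (auto simp: condP_def)

lemma condP_pos:
  assumes "\<forall>xv. 0 < Pr beta xv \<and> Pr beta xv < 1"
  shows "0 < condP Pr beta xv c"
  using assms by (simp add: condP_def)

lemma sum_log_odds_flipped_eq_loglik_diff:
  fixes Pr :: "'b \<Rightarrow> 'x \<Rightarrow> real" and c0 c1 :: "nat \<Rightarrow> nat"
  assumes "finite I"
    and c0: "\<And>i. c0 i \<in> {0, 1}" and c1: "\<And>i. c1 i \<in> {0, 1}"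
    and Pr: "\<forall>xv. 0 < Pr beta xv \<and> Pr beta xv < 1"
  shows "(\<Sum>i\<in>{i \<in> I. c0 i \<noteq> c1 i}.
            ln (condP Pr beta (xs i) (c1 i) / (1 - condP Pr beta (xs i) (c1 i))))
         = loglik Pr I xs c1 beta - loglik Pr I xs c0 beta"
proof -
  let ?S = "{i \<in> I. c0 i \<noteq> c1 i}"
  let ?d = "\<lambda>i. ln (condP Pr beta (xs i) (c1 i)) - ln (condP Pr beta (xs i) (c0 i))"
  have "loglik Pr I xs c1 beta - loglik Pr I xs c0 beta = (\<Sum>i\<in>I. ?d i)"
    by (simp add: loglik_def sum_subtractf)
  also have "\<dots> = (\<Sum>i\<in>?S. ?d i)"
    by (rule sum.mono_neutral_right) (use \<open>finite I\<close> in auto)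
  also have "\<dots> = (\<Sum>i\<in>?S. ln (condP Pr beta (xs i) (c1 i) / (1 - condP Pr beta (xs i) (c1 i))))"
  proof (rule sum.cong)
    fix i assume "i \<in> ?S"
    then have "1 - condP Pr beta (xs i) (c1 i) = condP Pr beta (xs i) (c0 i)"
      using c0 c1 by (intro condP_other_label) auto
    then show "?d i = ln (condP Pr beta (xs i) (c1 i) / (1 - condP Pr beta (xs i) (c1 i)))"
      using condP_pos[of Pr beta, OF Pr] by (simp add: ln_div less_imp_neq[symmetric])
  qed simp
  finally show ?thesis by simp
qed

lemma mu_lo_flipped_eq_loglik_diff:
  fixes Pr :: "'b \<Rightarrow> 'x \<Rightarrow> real" and c0 c1 :: "nat \<Rightarrow> nat"
  assumes "finite I" and "\<And>i. c0 i \<in> {0, 1}" and "\<And>i. c1 i \<in> {0, 1}"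
    and "\<forall>xv. 0 < Pr beta xv \<and> Pr beta xv < 1"
  shows "mu_lo Pr {i \<in> I. c0 i \<noteq> c1 i} xs c1 beta
         = (loglik Pr I xs c1 beta - loglik Pr I xs c0 beta) / real (card {i \<in> I. c0 i \<noteq> c1 i})"
  using sum_log_odds_flipped_eq_loglik_diff[of I c0 c1 Pr beta, OF assms] by (simp add: mu_lo_def)

lemma mu_lo_flipped_maximiser_mono:
  fixes Pr :: "'b \<Rightarrow> 'x \<Rightarrow> real" and c0 c1 :: "nat \<Rightarrow> nat"
  assumes "finite I" and "\<And>i. c0 i \<in> {0, 1}" and "\<And>i. c1 i \<in> {0, 1}"
    and Pr0: "\<forall>xv. 0 < Pr beta0 xv \<and> Pr beta0 xv < 1"
    and Pr1: "\<forall>xv. 0 < Pr beta1 xv \<and> Pr beta1 xv < 1"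
    and max0: "loglik Pr I xs c0 beta1 \<le> loglik Pr I xs c0 beta0"
    and max1: "loglik Pr I xs c1 beta0 \<le> loglik Pr I xs c1 beta1"
  shows "mu_lo Pr {i \<in> I. c0 i \<noteq> c1 i} xs c1 beta0 \<le> mu_lo Pr {i \<in> I. c0 i \<noteq> c1 i} xs c1 beta1"
  unfolding mu_lo_flipped_eq_loglik_diff[of I c0 c1 Pr beta0, OF assms(1-3) Pr0]
    mu_lo_flipped_eq_loglik_diff[of I c0 c1 Pr beta1, OF assms(1-3) Pr1]
  by (rule divide_right_mono) (use max0 max1 in auto)

theorem theorem2:
  fixes k :: nat and eps delta gamma :: real
    and x :: "nat \<Rightarrow> real ^ 'm" and A p :: "nat \<Rightarrow> real"
    and Theta :: "'b set" and Pr :: "'b \<Rightarrow> real ^ 'm \<Rightarrow> real"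
    and beta0 betag :: 'b
  assumes "k \<ge> 1" and "0 < eps" and "eps < 1" and "delta \<ge> 0"
    and "\<forall>i \<in> {1..k}. 0 \<le> p i \<and> p i \<le> 1"
    and "\<forall>beta \<in> Theta. \<forall>xv. 0 < Pr beta xv \<and> Pr beta xv < 1"
    and "gamma > 0"
    and "{i \<in> {1..k}. cval k eps delta A p 0 i \<noteq> cval k eps delta A p gamma i} \<noteq> {}"
    and "beta0 \<in> Theta"
    and "\<forall>beta \<in> Theta. loglik Pr {1..k} x (cval k eps delta A p 0) beta
                       \<le> loglik Pr {1..k} x (cval k eps delta A p 0) beta0"
    and "betag \<in> Theta"
    and "\<forall>beta \<in> Theta. loglik Pr {1..k} x (cval k eps delta A p gamma) beta
                       \<le> loglik Pr {1..k} x (cval k eps delta A p gamma) betag"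
  shows "mu_lo Pr {i \<in> {1..k}. cval k eps delta A p 0 i \<noteq> cval k eps delta A p gamma i} x
            (cval k eps delta A p gamma) betag
         \<ge> mu_lo Pr {i \<in> {1..k}. cval k eps delta A p 0 i \<noteq> cval k eps delta A p gamma i} x
            (cval k eps delta A p gamma) beta0"
  using assms(6,9-12)
  by (intro mu_lo_flipped_maximiser_mono cval_binary) auto

end
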